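(* Let $G$ be a $4$-critical non-complete graph with $n(G)$ vertices and $m(G)$ edges. Then $G$ contains at most $m(G)/2$ double-critical edges. Moreover, $G$ contains precisely $m(G)/2$ double-critical edges if and only if $G$ contains a vertex $v$ of degree $n(G)-1$ such that $G-v$ is an odd cycle of length at least $5$.
   Context: All graphs are finite and simple. A graph is $4$-critical if it is $4$-chromatic and $\chi(G-v)<\chi(G)$ for every vertex $v$. An edge $xy$ of $G$ is double-critical if $\chi(G-x-y)=\chi(G)-2$. *)

theory Defs
  imports Main
begin

definition graph :: "'a set \<Rightarrow> 'a set set \<Rightarrow> bool" where
  "graph V E \<longleftrightarrow> finite V \<and> (\<forall>e\<in>E. \<exists>x y. x \<noteq> y \<and> x \<in> V \<and> y \<in> V \<and> e = {x, y})"

definition colorable :: "'a set \<Rightarrow> 'a set set \<Rightarrow> nat \<Rightarrow> bool" where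
  "colorable V E k \<longleftrightarrow> (\<exists>f :: 'a \<Rightarrow> nat. (\<forall>v\<in>V. f v < k) \<and>
      (\<forall>x y. {x, y} \<in> E \<longrightarrow> x \<noteq> y \<longrightarrow> f x \<noteq> f y))"

definition chromatic_number :: "'a set \<Rightarrow> 'a set set \<Rightarrow> nat" where
  "chromatic_number V E = (LEAST k. colorable V E k)"

definition del_verts_E :: "'a set set \<Rightarrow> 'a set \<Rightarrow> 'a set set" where
  "del_verts_E E S = {e \<in> E. e \<inter> S = {}}"

definition k_critical :: "nat \<Rightarrow> 'a set \<Rightarrow> 'a set set \<Rightarrow> bool" where
  "k_critical k V E \<longleftrightarrow> chromatic_number V E = k \<and>
     (\<forall>v\<in>V. chromatic_number (V - {v}) (del_verts_E E {v}) < chromatic_number V E)"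

definition double_critical_edge :: "'a set \<Rightarrow> 'a set set \<Rightarrow> 'a set \<Rightarrow> bool" where
  "double_critical_edge V E e \<longleftrightarrow> e \<in> E \<and>
     chromatic_number (V - e) (del_verts_E E e) = chromatic_number V E - 2"

definition complete_graph :: "'a set \<Rightarrow> 'a set set \<Rightarrow> bool" where
  "complete_graph V E \<longleftrightarrow> (\<forall>x\<in>V. \<forall>y\<in>V. x \<noteq> y \<longrightarrow> {x, y} \<in> E)"

definition degree :: "'a set set \<Rightarrow> 'a \<Rightarrow> nat" where
  "degree E v = card {e \<in> E. v \<in> e}"

definition is_cycle :: "'a set \<Rightarrow> 'a set set \<Rightarrow> bool" where
  "is_cycle V E \<longleftrightarrow> (\<exists>xs. distinct xs \<and> set xs = V \<and> length xs \<ge> 3 \<and>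
     E = {{xs ! i, xs ! ((i + 1) mod length xs)} | i. i < length xs})"

end

theory Submission
  imports Defs
begin

text \<open>
  If two double-critical edges xy and uv of a 4-critical graph G were disjoint, 2-colourings of
  G - x - y and G - u - v could be merged into a 3-colouring of G, unless x, y, u, v span a K4,
  which is impossible as G is not complete. Pairwise intersecting edges form a star or lie in a
  triangle. Every vertex has degree at least 3, so 2 m(G) \<ge> deg x + 3 (n(G) - 1) \<ge> 4 deg x, and a star
  at x contains at most m(G)/2 edges; a triangle contains fewer, since n(G) \<ge> 5.

  Equality forces x to be adjacent to every vertex, all other vertices to have degree 3 and every
  spoke xz to be double-critical, i.e. G - x - z to be 2-colourable. Then G - x is 2-regular, so
  each of its components is a cycle C. Such a C is odd, for otherwise C and the rest of G - x could
  be 2-coloured separately and x could take the third colour. So C contains every vertex z of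
  G - x, as otherwise the odd cycle C would survive in the 2-colourable G - x - z. Conversely, in an
  odd wheel every spoke is double-critical, since deleting its ends leaves a path, and the spokes
  are half of the edges.
\<close>

lemma graph_edgeE:
  assumes "graph V E" "e \<in> E"
  obtains x y where "x \<noteq> y" "x \<in> V" "y \<in> V" "e = {x, y}"
  using assms unfolding graph_def by blast

lemma graph_edge_doubleton: "graph V E \<Longrightarrow> e \<in> E \<Longrightarrow> \<exists>x y. x \<noteq> y \<and> e = {x, y}"
  unfolding graph_def by blast

lemma graph_edge_vertices:
  assumes "graph V E" "{x, y} \<in> E"
  shows "x \<noteq> y" "x \<in> V" "y \<in> V"
  using assms unfolding graph_def by (metis doubleton_eq_iff)+

lemma graph_finite_edges:
  assumes "graph V E"
  shows "finite E"
proof -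
  have "E \<subseteq> Pow V" by (auto elim: graph_edgeE[OF assms])
  then show ?thesis using assms unfolding graph_def by (meson finite_Pow_iff finite_subset)
qed

lemma graph_del_verts_E:
  assumes "graph V E"
  shows "graph (V - S) (del_verts_E E S)"
  unfolding graph_def
proof (intro conjI ballI)
  show "finite (V - S)" using assms unfolding graph_def by simp
  fix e assume "e \<in> del_verts_E E S"
  then have e: "e \<in> E" "e \<inter> S = {}" unfolding del_verts_E_def by auto
  obtain x y where "x \<noteq> y" "x \<in> V" "y \<in> V" "e = {x, y}" by (rule graph_edgeE[OF assms e(1)])
  then show "\<exists>x y. x \<noteq> y \<and> x \<in> V - S \<and> y \<in> V - S \<and> e = {x, y}" using e(2) by blast
qed

lemma del_verts_E_del_verts_E: "del_verts_E (del_verts_E E S) T = del_verts_E E (S \<union> T)"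
  unfolding del_verts_E_def by auto

definition neighbours :: "'a set set \<Rightarrow> 'a \<Rightarrow> 'a set" where
  "neighbours E w = {z. {w, z} \<in> E}"

lemma neighbours_subset:
  assumes "graph V E"
  shows "neighbours E w \<subseteq> V - {w}"
  unfolding neighbours_def using graph_edge_vertices[OF assms] by blast

lemma finite_neighbours: "graph V E \<Longrightarrow> finite (neighbours E w)"
  by (meson finite_Diff finite_subset graph_def neighbours_subset)

lemma neighbours_del_verts_E: "w \<notin> S \<Longrightarrow> neighbours (del_verts_E E S) w = neighbours E w - S"
  unfolding neighbours_def del_verts_E_def by auto

lemma degree_eq_card_neighbours:
  assumes G: "graph V E"
  shows "degree E w = card (neighbours E w)"
proof -
  have "{e \<in> E. w \<in> e} = (\<lambda>z. {w, z}) ` neighbours E w"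
  proof (intro equalityI subsetI)
    fix e assume "e \<in> {e \<in> E. w \<in> e}"
    then have e: "e \<in> E" "w \<in> e" by auto
    obtain x y where "x \<noteq> y" "x \<in> V" "y \<in> V" "e = {x, y}" by (rule graph_edgeE[OF G e(1)])
    then obtain z where "e = {w, z}" using e(2) by (auto simp: insert_commute)
    then show "e \<in> (\<lambda>z. {w, z}) ` neighbours E w" using e(1) unfolding neighbours_def by blast
  qed (auto simp: neighbours_def)
  moreover have "inj_on (\<lambda>z. {w, z}) (neighbours E w)"
    unfolding inj_on_def by (metis doubleton_eq_iff)
  ultimately show ?thesis unfolding degree_def by (simp add: card_image)
qed

lemma degree_le_card: "graph V E \<Longrightarrow> degree E w \<le> card (V - {w})"
  by (metis card_mono degree_eq_card_neighbours finite_Diff graph_def neighbours_subset)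

lemma neighbours_eq_if_degree_eq_card:
  "graph V E \<Longrightarrow> degree E w = card (V - {w}) \<Longrightarrow> neighbours E w = V - {w}"
  by (metis card_subset_eq degree_eq_card_neighbours finite_Diff graph_def neighbours_subset)

lemma degree_del_vertex:
  assumes "graph V E" "{x, w} \<in> E"
  shows "degree E w = Suc (degree (del_verts_E E {x}) w)"
proof -
  have x: "x \<in> neighbours E w" "w \<noteq> x"
    using assms graph_edge_vertices[OF assms] unfolding neighbours_def by (simp_all add: insert_commute)
  have "degree E w = card (neighbours E w)" by (rule degree_eq_card_neighbours[OF assms(1)])
  also have "\<dots> = Suc (card (neighbours E w - {x}))"
    by (rule card.remove[OF finite_neighbours[OF assms(1)] x(1)])
  also have "neighbours E w - {x} = neighbours (del_verts_E E {x}) w"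
    using neighbours_del_verts_E[of w "{x}" E] x(2) by simp
  finally show ?thesis
    using degree_eq_card_neighbours[OF graph_del_verts_E[OF assms(1)]] by simp
qed

lemma sum_degree_eq_twice_card_edges:
  assumes G: "graph V E"
  shows "(\<Sum>w\<in>V. degree E w) = 2 * card E"
proof -
  have fV: "finite V" using G unfolding graph_def by simp
  have "(\<Sum>w\<in>V. degree E w) = (\<Sum>w\<in>V. \<Sum>e\<in>E. if w \<in> e then 1 else 0)"
    unfolding degree_def by (simp add: graph_finite_edges[OF G] sum.If_cases Int_def)
  also have "\<dots> = (\<Sum>e\<in>E. \<Sum>w\<in>V. if w \<in> e then 1 else 0)" by (rule sum.swap)
  also have "\<dots> = (\<Sum>e\<in>E. card (V \<inter> e))" by (simp add: fV sum.If_cases Int_def)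
  also have "\<dots> = (\<Sum>e\<in>E. 2)"
  proof (rule sum.cong)
    fix e assume "e \<in> E"
    then obtain x y where "x \<noteq> y" "x \<in> V" "y \<in> V" "e = {x, y}" by (rule graph_edgeE[OF G])
    then show "card (V \<inter> e) = 2" by auto
  qed simp
  finally show ?thesis by simp
qed

lemma card_edges_eq_degree_plus_del_vertex:
  assumes "graph V E"
  shows "card E = degree E v + card (del_verts_E E {v})"
proof -
  have "E = {e \<in> E. v \<in> e} \<union> del_verts_E E {v}" unfolding del_verts_E_def by auto
  moreover have "{e \<in> E. v \<in> e} \<inter> del_verts_E E {v} = {}" unfolding del_verts_E_def by auto
  ultimately show ?thesis
    unfolding degree_def using graph_finite_edges[OF assms]
    by (metis card_Un_disjoint finite_Un)
qed


lemma chromatic_number_le: "colorable V E k \<Longrightarrow> chromatic_number V E \<le> k"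
  unfolding chromatic_number_def by (rule Least_le)

lemma colorable_card:
  assumes "graph V E"
  shows "colorable V E (card V)"
proof -
  obtain h where h: "bij_betw h V {0..<card V}"
    using assms ex_bij_betw_finite_nat unfolding graph_def by blast
  then have "\<forall>v\<in>V. h v < card V" "inj_on h V" by (auto simp: bij_betw_def)
  then show ?thesis
    unfolding colorable_def using graph_edge_vertices[OF assms] by (metis inj_onD)
qed

lemma colorable_chromatic_number: "graph V E \<Longrightarrow> colorable V E (chromatic_number V E)"
  unfolding chromatic_number_def by (rule LeastI, rule colorable_card)

lemma colorable_mono: "colorable V E k \<Longrightarrow> k \<le> k' \<Longrightarrow> colorable V E k'"
  unfolding colorable_def by (meson order_less_le_trans)

lemma colorable_iff_chromatic_number_le:
  "graph V E \<Longrightarrow> colorable V E k \<longleftrightarrow> chromatic_number V E \<le> k"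
  using chromatic_number_le colorable_chromatic_number colorable_mono by blast

lemma colorable_subgraph: "colorable V E k \<Longrightarrow> V' \<subseteq> V \<Longrightarrow> E' \<subseteq> E \<Longrightarrow> colorable V' E' k"
  unfolding colorable_def by blast

lemma colorable_no_edges: "0 < k \<Longrightarrow> colorable V {} k"
  unfolding colorable_def by (intro exI[of _ "\<lambda>_. 0"]) auto

lemma chromatic_number_eq_2:
  assumes "colorable V E 2" "{p, q} \<in> E" "p \<noteq> q" "p \<in> V" "q \<in> V"
  shows "chromatic_number V E = 2"
  unfolding chromatic_number_def
proof (rule Least_equality)
  fix k assume "colorable V E k"
  then obtain f :: "'a \<Rightarrow> nat" where "f p < k" "f q < k" "f p \<noteq> f q"
    using assms(2-5) unfolding colorable_def by blast
  then show "2 \<le> k" by linarith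
qed (fact assms(1))

lemma colorable_if_not_complete:
  assumes G: "graph V E" and "\<not> complete_graph V E" and "card V \<le> Suc k"
  shows "colorable V E k"
proof -
  obtain p q where pq: "p \<in> V" "q \<in> V" "p \<noteq> q" "{p, q} \<notin> E"
    using assms(2) unfolding complete_graph_def by blast
  define R where "R = V - {p, q}"
  have "finite V" using G unfolding graph_def by simp
  moreover have "card {p, q} \<le> card V" using pq \<open>finite V\<close> by (intro card_mono) auto
  ultimately have card_R: "card R < k"
    unfolding R_def using assms(3) pq by (simp add: card_Diff_subset)
  obtain h where h: "bij_betw h R {0..<card R}"
    using ex_bij_betw_finite_nat \<open>finite V\<close> R_def by blast
  \<comment> \<open>p and q share colour 0; the at most k - 1 other vertices get distinct colours\<close>
  define f where "f w = (if w \<in> R then h w + 1 else 0)" for w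
  have "f x \<noteq> f y" if "{x, y} \<in> E" "x \<noteq> y" for x y
  proof -
    have "x \<in> V" "y \<in> V" using graph_edge_vertices[OF G that(1)] by auto
    moreover have "{x, y} \<noteq> {p, q}" using that pq(4) by auto
    ultimately have "x \<in> R \<or> y \<in> R" unfolding R_def using that(2) by auto
    then show ?thesis
      using h that(2) unfolding f_def by (auto simp: bij_betw_def inj_on_def)
  qed
  moreover have "f w < k" for w
    using bij_betwE[OF h] card_R unfolding f_def by fastforce
  ultimately show ?thesis unfolding colorable_def by blast
qed

lemma k_critical_not_colorable: "k_critical k V E \<Longrightarrow> 0 < k \<Longrightarrow> \<not> colorable V E (k - 1)"
  unfolding k_critical_def using chromatic_number_le by fastforce

lemma k_critical_colorable_del_vertex:
  assumes "graph V E" "k_critical k V E" "v \<in> V"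
  shows "colorable (V - {v}) (del_verts_E E {v}) (k - 1)"
proof -
  have "chromatic_number (V - {v}) (del_verts_E E {v}) < k"
    using assms(2,3) unfolding k_critical_def by auto
  then show ?thesis
    using colorable_iff_chromatic_number_le[OF graph_del_verts_E[OF assms(1)]] by simp
qed

lemma double_critical_edge_colorable:
  assumes "graph V E" "double_critical_edge V E e"
  shows "colorable (V - e) (del_verts_E E e) (chromatic_number V E - 2)"
  using assms(2) colorable_iff_chromatic_number_le[OF graph_del_verts_E[OF assms(1)]]
  unfolding double_critical_edge_def by simp

lemma colorable_extend_to_vertex:
  assumes G: "graph V E" and col: "colorable (V - {w}) (del_verts_E E {w}) k"
    and deg: "degree E w < k"
  shows "colorable V E k"
proof -
  obtain f where f_lt: "\<forall>v\<in>V - {w}. f v < k"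
    and f_ne: "\<forall>x y. {x, y} \<in> del_verts_E E {w} \<longrightarrow> x \<noteq> y \<longrightarrow> f x \<noteq> f y"
    using col unfolding colorable_def by blast
  have "card (f ` neighbours E w) < card {..<k}"
    using deg card_image_le[OF finite_neighbours[OF G], of f w] degree_eq_card_neighbours[OF G]
    by simp
  then have "\<not> {..<k} \<subseteq> f ` neighbours E w"
    using card_mono[OF finite_imageI[OF finite_neighbours[OF G]]] not_le by blast
  then obtain c where c: "c < k" "c \<notin> f ` neighbours E w" by blast
  have "(f(w := c)) x \<noteq> (f(w := c)) y" if e: "{x, y} \<in> E" "x \<noteq> y" for x y
  proof -
    have "x \<in> neighbours E y" "y \<in> neighbours E x"
      using e(1) unfolding neighbours_def by (simp_all add: insert_commute)
    moreover have "x \<noteq> w \<Longrightarrow> y \<noteq> w \<Longrightarrow> f x \<noteq> f y"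
      using f_ne e unfolding del_verts_E_def by simp
    ultimately show ?thesis using c(2) e(2) by (cases "x = w"; cases "y = w") auto
  qed
  moreover have "\<forall>v\<in>V. (f(w := c)) v < k" using f_lt c(1) by simp
  ultimately show ?thesis unfolding colorable_def by blast
qed

lemma k_critical_degree_ge:
  assumes "graph V E" "k_critical k V E" "0 < k" "w \<in> V"
  shows "k - 1 \<le> degree E w"
  using colorable_extend_to_vertex[OF assms(1) k_critical_colorable_del_vertex[OF assms(1,2,4)]]
    k_critical_not_colorable[OF assms(2,3)] by (meson not_le)

lemma k_critical_clique:
  assumes G: "graph V E" and crit: "k_critical k V E" "0 < k"
    and K: "K \<subseteq> V" "k \<le> card K" "\<And>x y. x \<in> K \<Longrightarrow> y \<in> K \<Longrightarrow> x \<noteq> y \<Longrightarrow> {x, y} \<in> E"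
  shows "V = K"
proof (rule ccontr)
  assume "V \<noteq> K"
  then obtain w where w: "w \<in> V" "w \<notin> K" using K(1) by blast
  obtain f where f_lt: "\<forall>v\<in>V - {w}. f v < k - 1"
    and f_ne: "\<forall>x y. {x, y} \<in> del_verts_E E {w} \<longrightarrow> x \<noteq> y \<longrightarrow> f x \<noteq> f y"
    using k_critical_colorable_del_vertex[OF G crit(1) w(1)] unfolding colorable_def by blast
  have "inj_on f K"
    using f_ne K(3) w(2) unfolding inj_on_def del_verts_E_def by blast
  moreover have "f ` K \<subseteq> {..<k - 1}" using f_lt K(1) w(2) by auto
  ultimately have "card K \<le> k - 1" using card_inj_on_le[of f K "{..<k - 1}"] by simp
  then show False using K(2) crit(2) by linarith
qed

section \<open>Double-critical edges of 4-critical graphs pairwise intersect\<close>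

lemma colorable_2_del_verts_predicate:
  assumes G: "graph V E" and col: "colorable (V - S) (del_verts_E E S) 2" and u: "u \<in> V - S"
  obtains P where "\<not> P u"
    "\<And>p q. {p, q} \<in> E \<Longrightarrow> p \<noteq> q \<Longrightarrow> p \<notin> S \<Longrightarrow> q \<notin> S \<Longrightarrow> P p \<noteq> P q"
proof -
  obtain f where f_lt: "\<forall>w\<in>V - S. f w < (2::nat)"
    and f_ne: "\<forall>p q. {p, q} \<in> del_verts_E E S \<longrightarrow> p \<noteq> q \<longrightarrow> f p \<noteq> f q"
    using col unfolding colorable_def by blast
  show thesis
  proof (rule that[of "\<lambda>w. f w \<noteq> f u"])
    fix p q assume e: "{p, q} \<in> E" "p \<noteq> q" "p \<notin> S" "q \<notin> S"
    have "f p \<noteq> f q" using f_ne e unfolding del_verts_E_def by auto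
    moreover have "f p < 2" "f q < 2" "f u < 2"
      using f_lt graph_edge_vertices[OF G e(1)] e u by auto
    ultimately show "(f p \<noteq> f u) \<noteq> (f q \<noteq> f u)" by linarith
  qed simp
qed

lemma colorable_3_if_disjoint_edge_deletions_colorable_2:
  assumes G: "graph V E"
    and xy: "{x, y} \<in> E" and uv: "{u, v} \<in> E" and disj: "{x, y} \<inter> {u, v} = {}"
    and col_xy: "colorable (V - {x, y}) (del_verts_E E {x, y}) 2"
    and col_uv: "colorable (V - {u, v}) (del_verts_E E {u, v}) 2"
    and non_adj: "{u, x} \<notin> E \<or> {u, y} \<notin> E"
  shows "colorable V E 3"
proof -
  have ne: "x \<noteq> y" "u \<noteq> v" "x \<noteq> u" "x \<noteq> v" "y \<noteq> u" "y \<noteq> v"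
    using graph_edge_vertices[OF G xy] graph_edge_vertices[OF G uv] disj by auto
  obtain a where "\<not> a u"
    and a: "\<And>p q. {p, q} \<in> E \<Longrightarrow> p \<noteq> q \<Longrightarrow> p \<notin> {x, y} \<Longrightarrow> q \<notin> {x, y} \<Longrightarrow> a p \<noteq> a q"
    using colorable_2_del_verts_predicate[OF G col_xy] graph_edge_vertices[OF G uv] ne by auto
  obtain b where "\<not> b x"
    and b: "\<And>p q. {p, q} \<in> E \<Longrightarrow> p \<noteq> q \<Longrightarrow> p \<notin> {u, v} \<Longrightarrow> q \<notin> {u, v} \<Longrightarrow> b p \<noteq> b q"
    using colorable_2_del_verts_predicate[OF G col_uv] graph_edge_vertices[OF G xy] ne by auto
  have "a v" "b y" using a[OF uv] b[OF xy] \<open>\<not> a u\<close> \<open>\<not> b x\<close> ne by auto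
  \<comment> \<open>colour classes: 1 = {v} \<union> a, 2 = {y} \<union> (b - a), 0 = {x} \<union> rest;
    u joins the class of whichever of x, y it is not adjacent to\<close>
  define c where "c w = (if w = x then 0 else if w = y then 2 else if w = v then 1
     else if w = u then (if {u, y} \<in> E then 0 else 2) else if a w then 1 else if b w then 2 else (0::nat))"
    for w
  have "c p \<noteq> c q" if e: "{p, q} \<in> E" "p \<noteq> q" for p q
  proof -
    have e': "{q, p} \<in> E" using e(1) by (simp add: insert_commute)
    show ?thesis
      using a[OF e] a[OF e' e(2)[symmetric]] b[OF e] b[OF e' e(2)[symmetric]]
        \<open>a v\<close> \<open>b y\<close> \<open>\<not> a u\<close> \<open>\<not> b x\<close> non_adj e e' ne
      unfolding c_def by (auto simp: insert_commute)
  qed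
  moreover have "c w < 3" for w unfolding c_def by auto
  ultimately show ?thesis unfolding colorable_def by blast
qed

lemma double_critical_edges_intersect:
  assumes G: "graph V E" and crit: "k_critical 4 V E" and NC: "\<not> complete_graph V E"
    and dc: "double_critical_edge V E {x, y}" "double_critical_edge V E {u, v}"
  shows "{x, y} \<inter> {u, v} \<noteq> {}"
proof
  assume disj: "{x, y} \<inter> {u, v} = {}"
  have xy: "{x, y} \<in> E" and uv: "{u, v} \<in> E"
    using dc unfolding double_critical_edge_def by auto
  have chi: "chromatic_number V E = 4" using crit unfolding k_critical_def by simp
  have col_xy: "colorable (V - {x, y}) (del_verts_E E {x, y}) 2"
    and col_uv: "colorable (V - {u, v}) (del_verts_E E {u, v}) 2"
    using double_critical_edge_colorable[OF G dc(1)] double_critical_edge_colorable[OF G dc(2)] chi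
    by simp_all
  have not3: "\<not> colorable V E 3" using k_critical_not_colorable[OF crit] by simp
  have ne: "x \<noteq> y" "u \<noteq> v" "x \<noteq> u" "x \<noteq> v" "y \<noteq> u" "y \<noteq> v"
    using graph_edge_vertices(1)[OF G xy] graph_edge_vertices(1)[OF G uv] disj by auto
  have "{u, x} \<in> E \<and> {u, y} \<in> E"
    using colorable_3_if_disjoint_edge_deletions_colorable_2[OF G xy uv disj col_xy col_uv] not3 by blast
  moreover have "{v, x} \<in> E \<and> {v, y} \<in> E"
    using colorable_3_if_disjoint_edge_deletions_colorable_2[OF G xy _ _ col_xy, of v u] uv disj col_uv not3
    by (auto simp: insert_commute)
  ultimately have clique: "{p, q} \<in> E"
    if "p \<in> {x, y, u, v}" "q \<in> {x, y, u, v}" "p \<noteq> q" for p q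
    using that xy uv by (auto simp: insert_commute)
  have "{x, y, u, v} \<subseteq> V"
    using graph_edge_vertices[OF G xy] graph_edge_vertices[OF G uv] by auto
  moreover have "card {x, y, u, v} = 4" using ne by simp
  ultimately have "V = {x, y, u, v}"
    by (intro k_critical_clique[OF G crit]) (simp_all add: clique)
  then show False using NC clique unfolding complete_graph_def by simp
qed

lemma intersecting_doubletons_star_or_triangle:
  assumes two: "\<And>e. e \<in> F \<Longrightarrow> card e = 2"
    and meet: "\<And>e e'. e \<in> F \<Longrightarrow> e' \<in> F \<Longrightarrow> e \<inter> e' \<noteq> {}"
    and e0: "{a, b} \<in> F"
  shows "(\<exists>x\<in>{a, b}. \<forall>e\<in>F. x \<in> e) \<or> (\<exists>c. F \<subseteq> {{a, b}, {b, c}, {a, c}})"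
proof (rule ccontr)
  assume contra: "\<not> ?thesis"
  then obtain e1 e2 where e1: "e1 \<in> F" "a \<notin> e1" and e2: "e2 \<in> F" "b \<notin> e2" by blast
  have doubleton: "\<exists>p q. e = {p, q} \<and> p \<noteq> q" if "e \<in> F" for e
    using two[OF that] by (simp add: card_2_iff)
  have "a \<noteq> b" using two[OF e0] by auto
  obtain c where c: "e1 = {b, c}" "c \<noteq> a" "c \<noteq> b"
    using doubleton[OF e1(1)] meet[OF e0 e1(1)] e1(2) by (auto simp: insert_commute)
  obtain d where d: "e2 = {a, d}" "d \<noteq> b"
    using doubleton[OF e2(1)] meet[OF e0 e2(1)] e2(2) by (auto simp: insert_commute)
  have "d = c" using meet[OF e1(1) e2(1)] c d \<open>a \<noteq> b\<close> by auto
  have "e \<in> {{a, b}, {b, c}, {a, c}}" if e: "e \<in> F" for e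
  proof -
    obtain p q where pq: "e = {p, q}" "p \<noteq> q" using doubleton[OF e] by blast
    show ?thesis
    proof (cases "c \<in> e")
      case True
      then obtain r where "e = {c, r}" using pq by auto
      moreover have "r \<in> {a, b}" using meet[OF e e0] c(2,3) calculation by auto
      ultimately show ?thesis by (auto simp: insert_commute)
    next
      case False
      then have "b \<in> e" "a \<in> e"
        using meet[OF e e1(1)] meet[OF e e2(1)] unfolding c(1) d(1) \<open>d = c\<close> by blast+
      then have "e = {a, b}" using pq \<open>a \<noteq> b\<close> by auto
      then show ?thesis by simp
    qed
  qed
  then show False using contra by blast
qed

section \<open>Colouring cycles and paths\<close>

definition cycle_edges :: "'a list \<Rightarrow> 'a set set" where
  "cycle_edges xs = {{xs ! i, xs ! ((i + 1) mod length xs)} | i. i < length xs}"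

lemma is_cycle_iff:
  "is_cycle V E \<longleftrightarrow> (\<exists>xs. distinct xs \<and> set xs = V \<and> 3 \<le> length xs \<and> E = cycle_edges xs)"
  unfolding is_cycle_def cycle_edges_def by simp

lemma cycle_edges_at: "i < length xs \<Longrightarrow> {xs ! i, xs ! ((i + 1) mod length xs)} \<in> cycle_edges xs"
  unfolding cycle_edges_def by blast

lemma cycle_edgesE:
  assumes "e \<in> cycle_edges xs"
  obtains i where "i < length xs" "e = {xs ! i, xs ! ((i + 1) mod length xs)}"
  using assms unfolding cycle_edges_def by blast

lemma cycle_edge_subset:
  assumes "e \<in> cycle_edges xs"
  shows "e \<subseteq> set xs"
proof -
  obtain i where i: "i < length xs" "e = {xs ! i, xs ! ((i + 1) mod length xs)}"
    using assms by (rule cycle_edgesE)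
  then have "0 < length xs" by linarith
  then have "(i + 1) mod length xs < length xs" by simp
  then show ?thesis using i by simp
qed

lemma cycle_edges_consecutive: "Suc i < length xs \<Longrightarrow> {xs ! i, xs ! Suc i} \<in> cycle_edges xs"
  unfolding cycle_edges_def by force

lemma cycle_edges_last: "xs \<noteq> [] \<Longrightarrow> {xs ! (length xs - 1), xs ! 0} \<in> cycle_edges xs"
  unfolding cycle_edges_def by (rule CollectI, rule exI[of _ "length xs - 1"]) simp

lemma card_cycle_edges_le: "card (cycle_edges xs) \<le> length xs"
proof -
  have "cycle_edges xs = (\<lambda>i. {xs ! i, xs ! ((i + 1) mod length xs)}) ` {..<length xs}"
    unfolding cycle_edges_def by auto
  then show ?thesis using card_image_le[of "{..<length xs}"] by simp
qed

definition cycle_component :: "'a set set \<Rightarrow> 'a list \<Rightarrow> bool" where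
  "cycle_component H xs \<longleftrightarrow> distinct xs \<and> 3 \<le> length xs \<and> cycle_edges xs \<subseteq> H \<and>
     (\<forall>e\<in>H. e \<inter> set xs \<noteq> {} \<longrightarrow> e \<in> cycle_edges xs)"

lemma cycle_componentD:
  assumes "cycle_component H xs"
  shows "distinct xs" "3 \<le> length xs" "cycle_edges xs \<subseteq> H"
    and "\<And>e. e \<in> H \<Longrightarrow> e \<inter> set xs \<noteq> {} \<Longrightarrow> e \<in> cycle_edges xs"
  using assms unfolding cycle_component_def by auto

lemma distinct_ex_fun_nth:
  assumes "distinct xs"
  shows "\<exists>f. \<forall>i<length xs. f (xs ! i) = c i"
proof (intro exI allI impI)
  fix i assume "i < length xs"
  then show "(c \<circ> the_inv_into {..<length xs} ((!) xs)) (xs ! i) = c i"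
    using the_inv_into_f_f[OF inj_on_nth[OF assms, of "{..<length xs}"]] by simp
qed

lemma Suc_mod_2_neq: "Suc n mod 2 \<noteq> n mod 2"
  by presburger

lemma even_if_colorable_cycle:
  assumes xs: "distinct xs" "3 \<le> length xs" and col: "colorable (set xs) (cycle_edges xs) 2"
  shows "even (length xs)"
proof -
  obtain f where f_lt: "\<forall>v\<in>set xs. f v < (2::nat)"
    and f_ne: "\<forall>x y. {x, y} \<in> cycle_edges xs \<longrightarrow> x \<noteq> y \<longrightarrow> f x \<noteq> f y"
    using col unfolding colorable_def by blast
  have alternate: "f (xs ! i) = (f (xs ! 0) + i) mod 2" if "i < length xs" for i
    using that
  proof (induction i)
    case (Suc i)
    have "xs ! i \<noteq> xs ! Suc i"
      using nth_eq_iff_index_eq[OF xs(1), of i "Suc i"] Suc.prems by simp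
    then have "f (xs ! i) \<noteq> f (xs ! Suc i)"
      using f_ne cycle_edges_consecutive[OF Suc.prems] by blast
    moreover have "f (xs ! i) < 2" "f (xs ! Suc i) < 2" using f_lt Suc.prems by simp_all
    moreover have "f (xs ! i) = (f (xs ! 0) + i) mod 2" using Suc by simp
    moreover have "Suc (f (xs ! 0) + i) mod 2 \<noteq> (f (xs ! 0) + i) mod 2" by (rule Suc_mod_2_neq)
    ultimately show ?case by simp
  qed (use f_lt xs in simp)
  have "xs \<noteq> []" using xs(2) by auto
  have "xs ! (length xs - 1) \<noteq> xs ! 0"
    using nth_eq_iff_index_eq[OF xs(1), of "length xs - 1" 0] xs(2) \<open>xs \<noteq> []\<close> by simp
  moreover have "{xs ! (length xs - 1), xs ! 0} \<in> cycle_edges xs"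
    by (rule cycle_edges_last) fact
  ultimately have ne: "f (xs ! (length xs - 1)) \<noteq> f (xs ! 0)" using f_ne by blast
  have last: "f (xs ! (length xs - 1)) = (f (xs ! 0) + (length xs - 1)) mod 2"
    by (rule alternate) (use \<open>xs \<noteq> []\<close> in simp)
  have "odd (length xs - 1)"
  proof
    assume "even (length xs - 1)"
    then obtain k where "length xs - 1 = 2 * k" by (rule evenE)
    then show False using ne last f_lt \<open>xs \<noteq> []\<close> by simp
  qed
  then show ?thesis using \<open>xs \<noteq> []\<close> by simp
qed

lemma colorable_cycle_if_even:
  assumes xs: "distinct xs" and even: "even (length xs)"
  shows "colorable (set xs) (cycle_edges xs) 2"
proof -
  obtain f :: "'a \<Rightarrow> nat" where f: "\<And>i. i < length xs \<Longrightarrow> f (xs ! i) = i mod 2"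
    using distinct_ex_fun_nth[OF xs, of "\<lambda>i. i mod 2"] by auto
  have "f x \<noteq> f y" if e: "{x, y} \<in> cycle_edges xs" for x y
  proof -
    obtain i where i: "i < length xs" "{x, y} = {xs ! i, xs ! ((i + 1) mod length xs)}"
      using e by (rule cycle_edgesE)
    have "(i + 1) mod length xs mod 2 = (i + 1) mod 2" using even by (simp add: mod_mod_cancel)
    moreover have "(i + 1) mod length xs < length xs"
      by (rule mod_less_divisor) (use i(1) in linarith)
    ultimately have "f (xs ! i) \<noteq> f (xs ! ((i + 1) mod length xs))"
      using f[OF i(1)] f Suc_mod_2_neq[of i] by simp
    then show ?thesis using i(2) by (auto simp: doubleton_eq_iff)
  qed
  moreover have "\<forall>v\<in>set xs. f v < 2" using f by (auto simp: in_set_conv_nth)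
  ultimately show ?thesis unfolding colorable_def by blast
qed

lemma colorable_cycle_del_vertex:
  assumes xs: "distinct xs" and j: "j < length xs"
  shows "colorable (set xs - {xs ! j}) (del_verts_E (cycle_edges xs) {xs ! j}) 2"
proof -
  let ?L = "length xs"
  \<comment> \<open>colour by parity of the position, shifted by the length after the deleted vertex, so that
    the wrap-around edge is proper whatever the parity of the length\<close>
  obtain f :: "'a \<Rightarrow> nat" where f: "\<And>i. i < ?L \<Longrightarrow> f (xs ! i) = (if i < j then i else i + ?L) mod 2"
    using distinct_ex_fun_nth[OF xs, of "\<lambda>i. (if i < j then i else i + ?L) mod 2"] by auto
  have "f a \<noteq> f b" if e: "{a, b} \<in> del_verts_E (cycle_edges xs) {xs ! j}" for a b
  proof -
    have "{a, b} \<in> cycle_edges xs" "xs ! j \<notin> {a, b}" using e unfolding del_verts_E_def by auto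
    moreover obtain i where i: "i < ?L" "{a, b} = {xs ! i, xs ! ((i + 1) mod ?L)}"
      using calculation(1) by (rule cycle_edgesE)
    ultimately have i': "xs ! j \<noteq> xs ! i" "xs ! j \<noteq> xs ! ((i + 1) mod ?L)" by auto
    have succ: "(i + 1) mod ?L < ?L" by (rule mod_less_divisor) (use i(1) in linarith)
    have "i \<noteq> j" "(i + 1) mod ?L \<noteq> j" using i' by auto
    have "f (xs ! i) \<noteq> f (xs ! ((i + 1) mod ?L))"
    proof (cases "i + 1 < ?L")
      case True
      then show ?thesis
        using f[OF i(1)] f[OF True] \<open>(i + 1) mod ?L \<noteq> j\<close> \<open>i \<noteq> j\<close>
          Suc_mod_2_neq[of i] Suc_mod_2_neq[of "i + ?L"] by auto
    next
      case False
      then have "Suc i = ?L" using i(1) by linarith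
      then have "i = ?L - 1" "(i + 1) mod ?L = 0" by auto
      moreover have "i + ?L = Suc (2 * (?L - 1))" using i(1) calculation(1) by linarith
      ultimately show ?thesis
        using f[OF i(1)] f[OF succ] \<open>i \<noteq> j\<close> \<open>(i + 1) mod ?L \<noteq> j\<close> j by auto
    qed
    then show ?thesis using i(2) by (auto simp: doubleton_eq_iff)
  qed
  moreover have "\<forall>v\<in>set xs - {xs ! j}. f v < 2" using f by (auto simp: in_set_conv_nth)
  ultimately show ?thesis unfolding colorable_def by blast
qed

lemma chromatic_number_cycle_del_vertex:
  assumes xs: "distinct xs" "3 \<le> length xs" and y: "y \<in> set xs"
  shows "chromatic_number (set xs - {y}) (del_verts_E (cycle_edges xs) {y}) = 2"
proof -
  obtain j where j: "j < length xs" "y = xs ! j" using y by (auto simp: in_set_conv_nth)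
  have nth_ne: "xs ! p \<noteq> xs ! q" if "p < length xs" "q < length xs" "p \<noteq> q" for p q
    using nth_eq_iff_index_eq[OF xs(1)] that by simp
  obtain p q where "{xs ! p, xs ! q} \<in> cycle_edges xs" "p < length xs" "q < length xs"
    "p \<noteq> q" "p \<noteq> j" "q \<noteq> j"
  proof (cases "j = 1")
    case True
    have "xs \<noteq> []" "length xs - 1 \<noteq> 1" "0 < length xs - 1" using xs(2) by auto
    then show ?thesis
      using that[of "length xs - 1" 0] cycle_edges_last[of xs] True by simp
  next
    case False
    define k where "k = (if j = 0 then 1 else 0 :: nat)"
    have "Suc k < length xs" "k \<noteq> j" "Suc k \<noteq> j" using False xs(2) unfolding k_def by auto
    then show ?thesis using that[of k "Suc k"] cycle_edges_consecutive by auto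
  qed
  note pq = this
  have "xs ! p \<noteq> xs ! q" "xs ! p \<noteq> y" "xs ! q \<noteq> y"
    using nth_ne[of p q] nth_ne[of p j] nth_ne[of q j] pq j by auto
  moreover have "colorable (set xs - {y}) (del_verts_E (cycle_edges xs) {y}) 2"
    using colorable_cycle_del_vertex[OF xs(1) j(1)] j(2) by simp
  ultimately show ?thesis
    using pq(1-3) by (intro chromatic_number_eq_2) (auto simp: del_verts_E_def)
qed

section \<open>Components of 2-regular graphs are cycles\<close>

fun nonbacktracking_walk :: "('a \<Rightarrow> 'a set) \<Rightarrow> 'a \<Rightarrow> 'a \<Rightarrow> nat \<Rightarrow> 'a" where
  "nonbacktracking_walk N a b 0 = a"
| "nonbacktracking_walk N a b (Suc 0) = b"
| "nonbacktracking_walk N a b (Suc (Suc k)) =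
     (SOME z. z \<in> N (nonbacktracking_walk N a b (Suc k)) \<and> z \<noteq> nonbacktracking_walk N a b k)"

declare nonbacktracking_walk.simps(3) [simp del]

lemma nonbacktracking_walk_periodic:
  assumes "nonbacktracking_walk N a b L = a" "nonbacktracking_walk N a b (Suc L) = b"
  shows "nonbacktracking_walk N a b (k + L) = nonbacktracking_walk N a b k"
proof -
  have "nonbacktracking_walk N a b (k + L) = nonbacktracking_walk N a b k \<and>
      nonbacktracking_walk N a b (Suc k + L) = nonbacktracking_walk N a b (Suc k)"
    by (induction k) (use assms in \<open>simp_all add: nonbacktracking_walk.simps(3)\<close>)
  then show ?thesis ..
qed

lemma nonbacktracking_walk_mod:
  assumes "nonbacktracking_walk N a b L = a" "nonbacktracking_walk N a b (Suc L) = b" "0 < L"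
  shows "nonbacktracking_walk N a b k = nonbacktracking_walk N a b (k mod L)"
proof (induction k rule: less_induct)
  case (less k)
  show ?case
  proof (cases "k < L")
    case False
    then have "nonbacktracking_walk N a b k = nonbacktracking_walk N a b (k - L)"
      using nonbacktracking_walk_periodic[OF assms(1,2), of "k - L"] by simp
    also have "\<dots> = nonbacktracking_walk N a b ((k - L) mod L)" using less assms(3) False by simp
    finally show ?thesis using False by (simp add: le_mod_geq)
  qed simp
qed

locale two_regular =
  fixes U :: "'a set" and H :: "'a set set"
  assumes graph: "graph U H"
    and degree_two: "\<And>w. w \<in> U \<Longrightarrow> degree H w = 2"
begin

lemma neighbour_in: "z \<in> neighbours H w \<Longrightarrow> z \<in> U \<and> z \<noteq> w"
  using neighbours_subset[OF graph] by blast

lemma neighbours_sym: "z \<in> neighbours H w \<longleftrightarrow> w \<in> neighbours H z"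
  unfolding neighbours_def by (simp add: insert_commute)

lemma neighbours_eq:
  assumes "w \<in> U" "p \<in> neighbours H w" "q \<in> neighbours H w" "p \<noteq> q"
  shows "neighbours H w = {p, q}"
proof -
  have "card (neighbours H w) = 2"
    using degree_two[OF assms(1)] degree_eq_card_neighbours[OF graph] by simp
  moreover have "card {p, q} = 2" using assms(4) by simp
  ultimately show ?thesis
    using assms(2,3) card_subset_eq[OF finite_neighbours[OF graph], of "{p, q}"] by simp
qed

lemma ex_other_neighbour:
  assumes "w \<in> U"
  shows "\<exists>z. z \<in> neighbours H w \<and> z \<noteq> y"
proof -
  have "card (neighbours H w) = 2"
    using degree_two[OF assms] degree_eq_card_neighbours[OF graph] by simp
  then obtain p q where "neighbours H w = {p, q}" "p \<noteq> q" by (auto simp: card_2_iff)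
  then show ?thesis by auto
qed

context
  fixes a b
  assumes a: "a \<in> U" and b: "b \<in> neighbours H a"
begin

abbreviation walk :: "nat \<Rightarrow> 'a" where
  "walk \<equiv> nonbacktracking_walk (neighbours H) a b"

lemma walk_Suc_Suc:
  assumes "walk (Suc k) \<in> U"
  shows "walk (Suc (Suc k)) \<in> neighbours H (walk (Suc k)) \<and> walk (Suc (Suc k)) \<noteq> walk k"
  using someI_ex[OF ex_other_neighbour[OF assms, of "walk k"]]
  by (simp add: nonbacktracking_walk.simps(3))

lemma walk_in_neighbours: "walk k \<in> U \<and> walk (Suc k) \<in> neighbours H (walk k)"
proof (induction k)
  case 0
  show ?case using a b by simp
next
  case (Suc k)
  then have "walk (Suc k) \<in> U" using neighbour_in by blast
  then show ?case using walk_Suc_Suc by blast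
qed

lemma walk_in: "walk k \<in> U"
  using walk_in_neighbours by blast

lemma walk_adjacent: "{walk k, walk (Suc k)} \<in> H"
  using walk_in_neighbours unfolding neighbours_def by blast

lemma walk_Suc_neq: "walk (Suc k) \<noteq> walk k"
  using walk_in_neighbours neighbour_in by blast

lemma walk_no_backtrack: "walk (Suc (Suc k)) \<noteq> walk k"
  using walk_Suc_Suc[OF walk_in] by blast

lemma walk_neighbours: "neighbours H (walk (Suc k)) = {walk k, walk (Suc (Suc k))}"
  using neighbours_eq[OF walk_in] walk_in_neighbours neighbours_sym walk_no_backtrack by metis

lemma walk_first_repeat_at_start:
  assumes inj: "inj_on walk {..<L}" and i: "i < L" "walk i = walk L"
  shows "i = 0"
proof (rule ccontr)
  assume "i \<noteq> 0"
  then obtain h where h: "i = Suc h" by (cases i) auto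
  obtain l where l: "L = Suc l" using i(1) by (cases L) auto
  have "walk l \<in> neighbours H (walk L)" using walk_neighbours[of l] l by simp
  also have "neighbours H (walk L) = {walk h, walk (Suc i)}" using walk_neighbours[of h] h i(2) by simp
  finally have "walk l = walk h \<or> walk l = walk (Suc i)" by simp
  moreover have "walk l \<noteq> walk h" using inj h i(1) l by (auto dest: inj_onD)
  moreover have "walk l \<noteq> walk (Suc i)"
  proof -
    consider "Suc i < l" | "Suc i = l" | "i = l" using i(1) l by linarith
    then show ?thesis
    proof cases
      case 1
      then show ?thesis using inj l by (auto dest: inj_onD)
    next
      case 2
      then show ?thesis using walk_no_backtrack[of i] i(2) l by simp
    next
      case 3
      then show ?thesis using walk_Suc_neq[of i] by simp
    qed
  qed
  ultimately show False by blast
qed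

lemma walk_repeats: "\<exists>j i. i < j \<and> walk i = walk j"
proof -
  have fin: "finite U" using graph unfolding graph_def by simp
  have "\<not> inj_on walk {..card U}"
  proof
    assume "inj_on walk {..card U}"
    moreover have "walk ` {..card U} \<subseteq> U" using walk_in by blast
    ultimately have "card {..card U} \<le> card U" using card_inj_on_le fin by blast
    then show False by simp
  qed
  then obtain p q where "walk p = walk q" "p \<noteq> q" unfolding inj_on_def by blast
  then show ?thesis by (metis linorder_neqE_nat)
qed

lemma walk_returns: "\<exists>L\<ge>3. inj_on walk {..<L} \<and> walk L = a \<and> walk (Suc L) = b"
proof -
  define L where "L = (LEAST j. \<exists>i<j. walk i = walk j)"
  obtain i where i: "i < L" "walk i = walk L"
    using LeastI_ex[OF walk_repeats] unfolding L_def by blast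
  have no_repeat: "walk p \<noteq> walk q" if "p < q" "q < L" for p q
    using not_less_Least[of q "\<lambda>j. \<exists>i<j. walk i = walk j"] that unfolding L_def by blast
  have inj: "inj_on walk {..<L}"
  proof (rule inj_onI)
    fix p q assume "p \<in> {..<L}" "q \<in> {..<L}" "walk p = walk q"
    then show "p = q" using no_repeat[of p q] no_repeat[of q p] by (cases p q rule: linorder_cases) auto
  qed
  have "i = 0" by (rule walk_first_repeat_at_start[OF inj i])
  then have "walk L = a" using i(2) by simp
  have "L \<noteq> 1" using walk_Suc_neq[of 0] \<open>walk L = a\<close> by auto
  moreover have "L \<noteq> 2" using walk_no_backtrack[of 0] \<open>walk L = a\<close> by (auto simp: numeral_2_eq_2)
  ultimately have "3 \<le> L" using i(1) by linarith
  \<comment> \<open>b and the last vertex before the return are the two neighbours of a\<close>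
  then obtain l where l: "L = Suc l" "2 \<le> l" by (cases L) auto
  have "neighbours H a = {walk l, walk (Suc L)}" using walk_neighbours[of l] l \<open>walk L = a\<close> by simp
  moreover have "b \<in> neighbours H a" "b \<noteq> walk l"
    using b inj_onD[OF inj, of 1 l] l by auto
  ultimately have "walk (Suc L) = b" by auto
  then show ?thesis using \<open>3 \<le> L\<close> inj \<open>walk L = a\<close> by blast
qed

lemma walk_cycle_edges:
  assumes L: "0 < L" "walk L = a" "walk (Suc L) = b"
  shows "cycle_edges (map walk [0..<L]) = range (\<lambda>k. {walk k, walk (Suc k)})"
proof -
  have walk_mod: "walk k = walk (k mod L)" for k by (rule nonbacktracking_walk_mod[OF L(2,3,1)])
  show ?thesis
  proof (intro equalityI subsetI)
    fix e assume "e \<in> cycle_edges (map walk [0..<L])"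
    then obtain i where i: "i < L" "e = {walk i, walk ((i + 1) mod L)}"
      by (auto elim: cycle_edgesE)
    then have "e = {walk i, walk (Suc i)}" using walk_mod[of "Suc i"] by simp
    then show "e \<in> range (\<lambda>k. {walk k, walk (Suc k)})" by blast
  next
    fix e assume "e \<in> range (\<lambda>k. {walk k, walk (Suc k)})"
    then obtain k where "e = {walk k, walk (Suc k)}" by blast
    then have "e = {walk (k mod L), walk ((k mod L + 1) mod L)}"
      using walk_mod[of k] walk_mod[of "Suc k"] by (simp add: mod_Suc_eq)
    moreover have "k mod L < L" using L(1) by simp
    ultimately show "e \<in> cycle_edges (map walk [0..<L])" unfolding cycle_edges_def by force
  qed
qed

lemma walk_closes_to_cycle: "\<exists>xs. cycle_component H xs \<and> a \<in> set xs"
proof -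
  obtain L where L: "3 \<le> L" "inj_on walk {..<L}" "walk L = a" "walk (Suc L) = b"
    using walk_returns by blast
  define xs where "xs = map walk [0..<L]"
  have edges: "cycle_edges xs = range (\<lambda>k. {walk k, walk (Suc k)})"
    unfolding xs_def using L by (intro walk_cycle_edges) simp_all
  have touching: "e \<in> cycle_edges xs" if e: "e \<in> H" "e \<inter> set xs \<noteq> {}" for e
  proof -
    obtain p q where pq: "e = {p, q}" "p \<in> set xs"
    proof -
      obtain x y where "e = {x, y}" by (rule graph_edgeE[OF graph e(1)])
      then show ?thesis using that[of x y] that[of y x] e(2) by (auto simp: insert_commute)
    qed
    then obtain j where j: "j < L" "p = walk j" unfolding xs_def by auto
    \<comment> \<open>write p as a successor on the walk, so that walk_neighbours describes its neighbours\<close>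
    have "walk (Suc (j + L - 1)) = walk j"
      using nonbacktracking_walk_periodic[OF L(3,4), of j] L(1) by simp
    then obtain k where k: "p = walk (Suc k)" using j(2) by metis
    have "q \<in> neighbours H (walk (Suc k))" using e(1) pq(1) k unfolding neighbours_def by simp
    then have "q \<in> {walk k, walk (Suc (Suc k))}" using walk_neighbours[of k] by simp
    then have "e = {walk k, walk (Suc k)} \<or> e = {walk (Suc k), walk (Suc (Suc k))}"
      using k pq(1) by (auto simp: insert_commute)
    then show ?thesis unfolding edges by blast
  qed
  have "distinct xs" unfolding xs_def using L(2) by (simp add: distinct_map atLeast0LessThan)
  moreover have "cycle_edges xs \<subseteq> H" using edges walk_adjacent by auto
  moreover have "3 \<le> length xs" unfolding xs_def using L(1) by simp
  ultimately have "cycle_component H xs" unfolding cycle_component_def using touching by blast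
  moreover have "a \<in> set xs"
    using L(1) nth_mem[of 0 xs] unfolding xs_def by simp
  ultimately show ?thesis by blast
qed

end

lemma cycle_component_through:
  assumes "a \<in> U"
  shows "\<exists>xs. cycle_component H xs \<and> a \<in> set xs"
proof -
  obtain b where "b \<in> neighbours H a" using ex_other_neighbour[OF assms] by blast
  then show ?thesis by (rule walk_closes_to_cycle[OF assms])
qed

end

section \<open>Odd wheels\<close>

lemma cycle_component_odd:
  assumes G: "graph V E" and not3: "\<not> colorable V E 3"
    and comp: "cycle_component (del_verts_E E {x}) xs" and a: "a \<in> set xs"
    and col: "colorable (V - {x, a}) (del_verts_E E {x, a}) 2"
  shows "odd (length xs)"
proof
  assume "even (length xs)"
  then have "colorable (set xs) (cycle_edges xs) 2"
    using colorable_cycle_if_even cycle_componentD(1)[OF comp] by blast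
  then obtain f where f_lt: "\<forall>v\<in>set xs. f v < (2::nat)"
    and f_ne: "\<forall>p q. {p, q} \<in> cycle_edges xs \<longrightarrow> p \<noteq> q \<longrightarrow> f p \<noteq> f q"
    unfolding colorable_def by blast
  obtain g where g_lt: "\<forall>v\<in>V - {x, a}. g v < (2::nat)"
    and g_ne: "\<forall>p q. {p, q} \<in> del_verts_E E {x, a} \<longrightarrow> p \<noteq> q \<longrightarrow> g p \<noteq> g q"
    using col unfolding colorable_def by blast
  \<comment> \<open>the cycle is a whole component of G - x, so it can be recoloured on its own\<close>
  define c where "c v = (if v = x then 2 else if v \<in> set xs then f v else g v)" for v
  have c_lt: "c v < 2" if "v \<in> V" "v \<noteq> x" for v
    using that f_lt g_lt a unfolding c_def by auto
  have "c p \<noteq> c q" if e: "{p, q} \<in> E" "p \<noteq> q" for p q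
  proof (cases "x \<in> {p, q}")
    case True
    then show ?thesis using c_lt graph_edge_vertices[OF G e(1)] unfolding c_def by force
  next
    case x_notin: False
    then have eH: "{p, q} \<in> del_verts_E E {x}" using e(1) unfolding del_verts_E_def by simp
    show ?thesis
    proof (cases "{p, q} \<inter> set xs = {}")
      case True
      then have "{p, q} \<in> del_verts_E E {x, a}"
        using e(1) x_notin a unfolding del_verts_E_def by auto
      then show ?thesis using g_ne e(2) True x_notin unfolding c_def by auto
    next
      case False
      then have "{p, q} \<in> cycle_edges xs" by (rule cycle_componentD(4)[OF comp eH])
      then have "p \<in> set xs" "q \<in> set xs" using cycle_edge_subset by blast+
      then show ?thesis
        using f_ne \<open>{p, q} \<in> cycle_edges xs\<close> e(2) x_notin unfolding c_def by auto
    qed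
  qed
  moreover have "c v < 3" if "v \<in> V" for v
    using c_lt[OF that] by (cases "v = x") (simp_all add: c_def)
  ultimately show False using not3 unfolding colorable_def by blast
qed

lemma cycle_component_vertices:
  assumes G: "graph U H" and comp: "cycle_component H xs"
  shows "set xs \<subseteq> U"
proof
  fix v assume "v \<in> set xs"
  then obtain i where "i < length xs" "v = xs ! i" by (auto simp: in_set_conv_nth)
  then have "{v, xs ! ((i + 1) mod length xs)} \<in> H"
    using cycle_edges_at cycle_componentD(3)[OF comp] by blast
  then show "v \<in> U" using graph_edge_vertices[OF G] by blast
qed

lemma cycle_component_spans:
  assumes G: "graph U H" and comp: "cycle_component H xs" and odd: "odd (length xs)"
    and col: "\<And>z. z \<in> U \<Longrightarrow> colorable (U - {z}) (del_verts_E H {z}) 2"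
  shows "set xs = U" and "H = cycle_edges xs"
proof -
  note xs = cycle_componentD[OF comp]
  have "z \<in> set xs" if z: "z \<in> U" for z
  proof (rule ccontr)
    assume "z \<notin> set xs"
    \<comment> \<open>then the odd cycle survives in the 2-colourable graph obtained by deleting z\<close>
    then have "set xs \<subseteq> U - {z}" using cycle_component_vertices[OF G comp] by auto
    moreover have "cycle_edges xs \<subseteq> del_verts_E H {z}"
      using xs(3) cycle_edge_subset \<open>z \<notin> set xs\<close> unfolding del_verts_E_def by blast
    ultimately have "colorable (set xs) (cycle_edges xs) 2" using colorable_subgraph col[OF z] by blast
    then show False using even_if_colorable_cycle[OF xs(1,2)] odd by simp
  qed
  then show "set xs = U" using cycle_component_vertices[OF G comp] by blast
  show "H = cycle_edges xs"
  proof
    show "H \<subseteq> cycle_edges xs"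
    proof
      fix e assume e: "e \<in> H"
      then obtain p q where "e = {p, q}" "p \<in> U" by (rule graph_edgeE[OF G])
      then show "e \<in> cycle_edges xs" using xs(4)[OF e] \<open>set xs = U\<close> by blast
    qed
  qed (fact xs(3))
qed

lemma odd_cycle_if_two_regular_rim:
  assumes G: "graph V E" and not3: "\<not> colorable V E 3" and x: "x \<in> V"
    and rim: "\<And>w. w \<in> V - {x} \<Longrightarrow> degree (del_verts_E E {x}) w = 2"
    and dc: "\<And>z. z \<in> V - {x} \<Longrightarrow> colorable (V - {x, z}) (del_verts_E E {x, z}) 2"
  shows "is_cycle (V - {x}) (del_verts_E E {x}) \<and> odd (card (V - {x}))"
proof -
  define U H where "U = V - {x}" and "H = del_verts_E E {x}"
  interpret two_regular U H
    using graph_del_verts_E[OF G] rim unfolding U_def H_def by unfold_locales simp_all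
  have "E \<noteq> {}" using not3 colorable_no_edges[of 3 V] by auto
  then obtain p q where "p \<noteq> q" "p \<in> V" "q \<in> V" using graph_edgeE[OF G] by blast
  then obtain a where a: "a \<in> U" unfolding U_def by blast
  then obtain xs where comp: "cycle_component H xs" and "a \<in> set xs"
    using cycle_component_through by blast
  have odd: "odd (length xs)"
    using cycle_component_odd[OF G not3] comp \<open>a \<in> set xs\<close> dc a unfolding U_def H_def by blast
  have "colorable (U - {z}) (del_verts_E H {z}) 2" if "z \<in> U" for z
  proof -
    have "U - {z} = V - {x, z}" unfolding U_def by auto
    moreover have "del_verts_E H {z} = del_verts_E E {x, z}"
      unfolding H_def del_verts_E_del_verts_E by (simp add: insert_commute)
    ultimately show ?thesis using dc that unfolding U_def by simp
  qed
  then have "set xs = U" "H = cycle_edges xs" using cycle_component_spans[OF graph comp odd] by auto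
  then show ?thesis
    using cycle_componentD(1,2)[OF comp] odd distinct_card[OF cycle_componentD(1)[OF comp]]
    unfolding is_cycle_iff U_def H_def by metis
qed

lemma double_critical_spoke:
  assumes G: "graph V E" and chi: "chromatic_number V E = 4"
    and cyc: "is_cycle (V - {v}) (del_verts_E E {v})" and e: "{v, y} \<in> E"
  shows "double_critical_edge V E {v, y}"
proof -
  obtain xs where xs: "distinct xs" "set xs = V - {v}" "3 \<le> length xs"
    "del_verts_E E {v} = cycle_edges xs"
    using cyc unfolding is_cycle_iff by blast
  have y: "y \<in> set xs" using graph_edge_vertices[OF G e] xs(2) by auto
  have "V - {v, y} = set xs - {y}" using xs(2) by auto
  moreover have "del_verts_E E {v, y} = del_verts_E (cycle_edges xs) {y}"
    using del_verts_E_del_verts_E[of E "{v}" "{y}"] xs(4) by (simp add: insert_commute)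
  ultimately have "chromatic_number (V - {v, y}) (del_verts_E E {v, y}) = 2"
    using chromatic_number_cycle_del_vertex[OF xs(1,3) y] by simp
  then show ?thesis unfolding double_critical_edge_def using e chi by simp
qed

definition odd_wheel_hub :: "'a set \<Rightarrow> 'a set set \<Rightarrow> 'a \<Rightarrow> bool" where
  "odd_wheel_hub V E v \<longleftrightarrow> degree E v = card V - 1 \<and> is_cycle (V - {v}) (del_verts_E E {v}) \<and>
     odd (card (V - {v})) \<and> 5 \<le> card (V - {v})"

lemma card_edges_le_double_critical_if_odd_wheel:
  assumes G: "graph V E" and chi: "chromatic_number V E = 4" and hub: "odd_wheel_hub V E v"
    and v: "v \<in> V"
  shows "card E \<le> 2 * card {e \<in> E. double_critical_edge V E e}"
proof -
  have fin: "finite V" using G unfolding graph_def by simp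
  obtain xs where xs: "distinct xs" "set xs = V - {v}" "del_verts_E E {v} = cycle_edges xs"
    using hub unfolding odd_wheel_hub_def is_cycle_iff by blast
  have "card (del_verts_E E {v}) \<le> degree E v"
    using card_cycle_edges_le[of xs] distinct_card[OF xs(1)] xs hub fin v
    unfolding odd_wheel_hub_def by simp
  then have "card E \<le> 2 * degree E v" using card_edges_eq_degree_plus_del_vertex[OF G, of v] by simp
  moreover have "{e \<in> E. v \<in> e} \<subseteq> {e \<in> E. double_critical_edge V E e}"
  proof
    fix e assume e: "e \<in> {e \<in> E. v \<in> e}"
    then obtain p q where "e = {p, q}" by (auto elim: graph_edgeE[OF G])
    then obtain y where "e = {v, y}" using e by (auto simp: insert_commute)
    then show "e \<in> {e \<in> E. double_critical_edge V E e}"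
      using e double_critical_spoke[OF G chi] hub unfolding odd_wheel_hub_def by auto
  qed
  then have "degree E v \<le> card {e \<in> E. double_critical_edge V E e}"
    unfolding degree_def using graph_finite_edges[OF G] by (intro card_mono) auto
  ultimately show ?thesis by linarith
qed

section \<open>Counting double-critical edges\<close>

lemma sum_eq_bound_if_ge:
  fixes f :: "'b \<Rightarrow> nat"
  assumes "finite A" "\<And>w. w \<in> A \<Longrightarrow> c \<le> f w" "sum f A \<le> c * card A" "w \<in> A"
  shows "f w = c"
proof (rule ccontr)
  assume "f w \<noteq> c"
  then have "c < f w" using assms(2,4) by (simp add: order_le_neq_trans)
  then have "sum (\<lambda>_. c) A < sum f A"
    using assms(1,2,4) by (intro sum_strict_mono_ex1) auto
  then show False using assms(3) by (simp add: mult.commute)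
qed

lemma twice_degree_le_card_edges:
  assumes G: "graph V E" and min_deg: "\<And>w. w \<in> V \<Longrightarrow> 3 \<le> degree E w" and x: "x \<in> V"
  shows "2 * degree E x \<le> card E"
    and "2 * degree E x = card E \<Longrightarrow> degree E x = card (V - {x}) \<and> (\<forall>w\<in>V - {x}. degree E w = 3)"
proof -
  have fin: "finite V" using G unfolding graph_def by simp
  have "2 * card E = degree E x + (\<Sum>w\<in>V - {x}. degree E w)"
    using sum_degree_eq_twice_card_edges[OF G] sum.remove[OF fin x, of "degree E"] by simp
  moreover have "3 * card (V - {x}) \<le> (\<Sum>w\<in>V - {x}. degree E w)"
    using sum_mono[of "V - {x}" "\<lambda>_. 3" "degree E"] min_deg by simp
  moreover have "degree E x \<le> card (V - {x})" by (rule degree_le_card[OF G])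
  ultimately show "2 * degree E x \<le> card E"
    and "2 * degree E x = card E \<Longrightarrow> degree E x = card (V - {x}) \<and> (\<forall>w\<in>V - {x}. degree E w = 3)"
    using sum_eq_bound_if_ge[of "V - {x}" 3 "degree E"] fin min_deg by auto
qed

lemma odd_wheel_hub_if_spokes_double_critical:
  assumes G: "graph V E" and crit: "k_critical 4 V E" and NC: "\<not> complete_graph V E"
    and x: "x \<in> V" and deg_x: "degree E x = card (V - {x})"
    and deg_rim: "\<And>w. w \<in> V - {x} \<Longrightarrow> degree E w = 3"
    and spokes: "\<And>z. z \<in> V - {x} \<Longrightarrow> double_critical_edge V E {x, z}"
  shows "odd_wheel_hub V E x"
proof -
  have fin: "finite V" using G unfolding graph_def by simp
  have not3: "\<not> colorable V E 3" using k_critical_not_colorable[OF crit] by simp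
  have chi: "chromatic_number V E = 4" using crit unfolding k_critical_def by simp
  have spoke: "{x, z} \<in> E" if "z \<in> V - {x}" for z
    using neighbours_eq_if_degree_eq_card[OF G deg_x] that unfolding neighbours_def by blast
  have "is_cycle (V - {x}) (del_verts_E E {x}) \<and> odd (card (V - {x}))"
  proof (rule odd_cycle_if_two_regular_rim[OF G not3 x])
    show "degree (del_verts_E E {x}) w = 2" if "w \<in> V - {x}" for w
      using degree_del_vertex[OF G spoke[OF that]] deg_rim[OF that] by simp
    show "colorable (V - {x, z}) (del_verts_E E {x, z}) 2" if "z \<in> V - {x}" for z
      using double_critical_edge_colorable[OF G spokes[OF that]] chi by simp
  qed
  moreover have "card (V - {x}) = card V - 1" using fin x by simp
  moreover have "5 \<le> card V" using colorable_if_not_complete[OF G NC, of 3] not3 by linarith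
  ultimately have "is_cycle (V - {x}) (del_verts_E E {x})" "odd (card (V - {x}))"
    "4 \<le> card (V - {x})" by auto
  moreover have "5 \<le> card (V - {x})" using calculation(2,3) by presburger
  ultimately show ?thesis
    unfolding odd_wheel_hub_def using deg_x x fin by simp
qed

lemma double_critical_star_bound:
  assumes G: "graph V E" and crit: "k_critical 4 V E" and NC: "\<not> complete_graph V E"
    and x: "x \<in> V" and star: "{e \<in> E. double_critical_edge V E e} \<subseteq> {e \<in> E. x \<in> e}"
  shows "2 * card {e \<in> E. double_critical_edge V E e} \<le> card E"
    and "2 * card {e \<in> E. double_critical_edge V E e} = card E \<Longrightarrow> odd_wheel_hub V E x"
proof -
  let ?D = "{e \<in> E. double_critical_edge V E e}"
  have min_deg: "3 \<le> degree E w" if "w \<in> V" for w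
    using k_critical_degree_ge[OF G crit _ that] by simp
  have fin: "finite {e \<in> E. x \<in> e}" using graph_finite_edges[OF G] by simp
  have D_le: "card ?D \<le> degree E x" unfolding degree_def by (rule card_mono[OF fin star])
  then show "2 * card ?D \<le> card E" using twice_degree_le_card_edges(1)[OF G min_deg x] by linarith
  assume eq: "2 * card ?D = card E"
  then have "2 * degree E x = card E" "card ?D = degree E x"
    using D_le twice_degree_le_card_edges(1)[OF G min_deg x] by linarith+
  then have deg: "degree E x = card (V - {x})" "\<And>w. w \<in> V - {x} \<Longrightarrow> degree E w = 3"
    using twice_degree_le_card_edges(2)[OF G min_deg x] by auto
  have "?D = {e \<in> E. x \<in> e}"
    using card_subset_eq[OF fin star] \<open>card ?D = degree E x\<close> unfolding degree_def by simp
  moreover have "{x, z} \<in> E" if "z \<in> V - {x}" for z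
    using neighbours_eq_if_degree_eq_card[OF G deg(1)] that unfolding neighbours_def by blast
  ultimately have spokes: "double_critical_edge V E {x, z}" if "z \<in> V - {x}" for z
    using that by blast
  show "odd_wheel_hub V E x"
    by (rule odd_wheel_hub_if_spokes_double_critical[OF G crit NC x deg(1) deg(2) spokes])
qed

lemma double_critical_triangle_bound:
  assumes G: "graph V E" and crit: "k_critical 4 V E" and NC: "\<not> complete_graph V E"
    and triangle: "{e \<in> E. double_critical_edge V E e} \<subseteq> {{a, b}, {b, c}, {a, c}}"
  shows "2 * card {e \<in> E. double_critical_edge V E e} < card E"
proof -
  have "card {e \<in> E. double_critical_edge V E e} \<le> card {{a, b}, {b, c}, {a, c}}"
    using triangle by (intro card_mono) auto
  also have "\<dots> \<le> 3" by (simp add: card_insert_le_m1)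
  finally have D: "card {e \<in> E. double_critical_edge V E e} \<le> 3" .
  have "3 * card V \<le> (\<Sum>w\<in>V. degree E w)"
    using sum_mono[of V "\<lambda>_. 3" "degree E"] k_critical_degree_ge[OF G crit] by simp
  moreover have "5 \<le> card V"
    using colorable_if_not_complete[OF G NC, of 3] k_critical_not_colorable[OF crit] by fastforce
  ultimately show ?thesis using D sum_degree_eq_twice_card_edges[OF G] by linarith
qed

lemma double_critical_edges_star_or_triangle:
  assumes G: "graph V E" and crit: "k_critical 4 V E" and NC: "\<not> complete_graph V E"
    and nonempty: "{e \<in> E. double_critical_edge V E e} \<noteq> {}"
  shows "(\<exists>x\<in>V. {e \<in> E. double_critical_edge V E e} \<subseteq> {e \<in> E. x \<in> e}) \<or>
    (\<exists>a b c. {e \<in> E. double_critical_edge V E e} \<subseteq> {{a, b}, {b, c}, {a, c}})"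
proof -
  let ?D = "{e \<in> E. double_critical_edge V E e}"
  obtain e where e: "e \<in> ?D" using nonempty by blast
  then obtain a b where "e = {a, b}" using graph_edge_doubleton[OF G] by blast
  then have ab: "{a, b} \<in> ?D" using e by simp
  have two: "card e = 2" if "e \<in> ?D" for e using that graph_edge_doubleton[OF G] by fastforce
  have meet: "e \<inter> e' \<noteq> {}" if d: "e \<in> ?D" "e' \<in> ?D" for e e'
  proof -
    obtain x y where "e = {x, y}" using d(1) graph_edge_doubleton[OF G] by blast
    moreover obtain u v where "e' = {u, v}" using d(2) graph_edge_doubleton[OF G] by blast
    ultimately show ?thesis using double_critical_edges_intersect[OF G crit NC, of x y u v] d by simp
  qed
  have "{a, b} \<subseteq> V" using ab graph_edge_vertices[OF G, of a b] by simp
  have "(\<exists>x\<in>{a, b}. \<forall>e\<in>?D. x \<in> e) \<or> (\<exists>c. ?D \<subseteq> {{a, b}, {b, c}, {a, c}})"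
    by (rule intersecting_doubletons_star_or_triangle[OF two meet ab])
  then show ?thesis
  proof (elim disjE bexE exE)
    fix x assume "x \<in> {a, b}" "\<forall>e\<in>?D. x \<in> e"
    then have "x \<in> V" "?D \<subseteq> {e \<in> E. x \<in> e}" using \<open>{a, b} \<subseteq> V\<close> by auto
    then show ?thesis by blast
  next
    fix c assume "?D \<subseteq> {{a, b}, {b, c}, {a, c}}"
    then show ?thesis by blast
  qed
qed

lemma double_critical_edges_bound:
  assumes G: "graph V E" and crit: "k_critical 4 V E" and NC: "\<not> complete_graph V E"
  shows "2 * card {e \<in> E. double_critical_edge V E e} \<le> card E"
    and "2 * card {e \<in> E. double_critical_edge V E e} = card E \<Longrightarrow> \<exists>v\<in>V. odd_wheel_hub V E v"
proof -
  let ?D = "{e \<in> E. double_critical_edge V E e}"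
  have "E \<noteq> {}"
  proof
    assume "E = {}"
    then show False using k_critical_not_colorable[OF crit] colorable_no_edges[of 3 V] by simp
  qed
  then have "card E \<noteq> 0" using graph_finite_edges[OF G] by simp
  have "2 * card ?D \<le> card E \<and> (2 * card ?D = card E \<longrightarrow> (\<exists>v\<in>V. odd_wheel_hub V E v))"
  proof (cases "?D = {}")
    case True
    show ?thesis unfolding True using \<open>card E \<noteq> 0\<close> by simp
  next
    case False
    from double_critical_edges_star_or_triangle[OF G crit NC False] show ?thesis
    proof (elim disjE bexE exE)
      fix x assume "x \<in> V" "?D \<subseteq> {e \<in> E. x \<in> e}"
      from double_critical_star_bound[OF G crit NC this] show ?thesis using \<open>x \<in> V\<close> by blast
    next
      fix a b c assume "?D \<subseteq> {{a, b}, {b, c}, {a, c}}"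
      from double_critical_triangle_bound[OF G crit NC this] show ?thesis by simp
    qed
  qed
  then show "2 * card ?D \<le> card E" "2 * card ?D = card E \<Longrightarrow> \<exists>v\<in>V. odd_wheel_hub V E v"
    by blast+
qed

theorem theorem19:
  fixes V :: "'a set" and E :: "'a set set"
  assumes "graph V E"
    and "k_critical 4 V E"
    and "\<not> complete_graph V E"
  shows "2 * card {e \<in> E. double_critical_edge V E e} \<le> card E \<and>
         (2 * card {e \<in> E. double_critical_edge V E e} = card E \<longleftrightarrow>
         (\<exists>v\<in>V. degree E v = card V - 1 \<and>
            is_cycle (V - {v}) (del_verts_E E {v}) \<and> odd (card (V - {v})) \<and> card (V - {v}) \<ge> 5))"
proof -
  let ?D = "{e \<in> E. double_critical_edge V E e}"
  have chi: "chromatic_number V E = 4" using assms(2) unfolding k_critical_def by simp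
  have "card E \<le> 2 * card ?D" if "\<exists>v\<in>V. odd_wheel_hub V E v"
    using that card_edges_le_double_critical_if_odd_wheel[OF assms(1) chi] by blast
  then have "2 * card ?D = card E \<longleftrightarrow> (\<exists>v\<in>V. odd_wheel_hub V E v)"
    using double_critical_edges_bound[OF assms] by (meson le_antisym)
  then show ?thesis using double_critical_edges_bound(1)[OF assms] unfolding odd_wheel_hub_def by simp
qed

end
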